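(* Let $G=(V,E)$ be a graph with $V=\{1,\ldots,n\}$, let $\mathbf{w}\colon E\to\{1,\ldots,N\}$, and let $w,\ell\in\mathbb{N}$ with $\ell$ even and $\ell\le n$. Define $$\mathcal{M}_{w,\ell}=\{(M_1,M_2)\mid M_1,M_2 \text{ are consistent matchings in } G,\ |M_1|=|M_2|=\ell/2,\ \mathbf{w}(M_1\cup M_2)=w\},$$ $$U_{w,\ell}=\Big\{(E_1,E_2,L)\ \Big|\ E_1,E_2\in\tbinom{E}{\ell/2},\ E_1\cap E_2=\emptyset,\ \mathbf{w}(E_1\cup E_2)=w,\ L\in\tbinom{V}{n-\ell}\Big\},$$ and for $i\in[2n]$ let $A_{w,\ell,i}=\{(E_1,E_2,L)\in U_{w,\ell}\mid i\in V(E_1)\cup L\}$ if $i\in[n]$, and $A_{w,\ell,i}=\{(E_1,E_2,L)\in U_{w,\ell}\mid i-n\in V(E_2)\cup L\}$ if $i\in[n+1,2n]$. Then $$\Big|\bigcap_{i\in[2n]}A_{w,\ell,i}\Big|=|\mathcal{M}_{w,\ell}|.$$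
   Context: Two matchings $M_1,M_2$ of a graph are consistent if $M_1\cap M_2=\emptyset$ and $V(M_1)=V(M_2)$, where $V(M)$ denotes the set of endpoints of edges of $M$. For a set $F$ of edges, $\mathbf{w}(F)=\sum_{e\in F}\mathbf{w}(e)$. $\binom{S}{k}$ is the family of $k$-element subsets of $S$; $[n]=\{1,\ldots,n\}$ and $[a,b]=\{a,\ldots,b\}$. *)

theory Defs
  imports Main
begin

definition simple_graph :: "nat \<Rightarrow> nat set set \<Rightarrow> bool" where
  "simple_graph n E \<longleftrightarrow> finite E \<and> (\<forall>e\<in>E. e \<subseteq> {1..n} \<and> card e = 2)"

definition matching :: "nat set set \<Rightarrow> nat set set \<Rightarrow> bool" where
  "matching E M \<longleftrightarrow> M \<subseteq> E \<and> (\<forall>e1\<in>M. \<forall>e2\<in>M. e1 \<noteq> e2 \<longrightarrow> e1 \<inter> e2 = {})"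

definition verts :: "nat set set \<Rightarrow> nat set" where
  "verts M = \<Union>M"

definition consistent :: "nat set set \<Rightarrow> nat set set \<Rightarrow> bool" where
  "consistent M1 M2 \<longleftrightarrow> M1 \<inter> M2 = {} \<and> verts M1 = verts M2"

definition wt :: "(nat set \<Rightarrow> nat) \<Rightarrow> nat set set \<Rightarrow> nat" where
  "wt W F = (\<Sum>e\<in>F. W e)"

definition Mset :: "nat set set \<Rightarrow> (nat set \<Rightarrow> nat) \<Rightarrow> nat \<Rightarrow> nat \<Rightarrow>
    (nat set set \<times> nat set set) set" where
  "Mset E W w l = {(M1, M2). matching E M1 \<and> matching E M2 \<and> consistent M1 M2 \<and>
      card M1 = l div 2 \<and> card M2 = l div 2 \<and> wt W (M1 \<union> M2) = w}"

definition Uset :: "nat \<Rightarrow> nat set set \<Rightarrow> (nat set \<Rightarrow> nat) \<Rightarrow> nat \<Rightarrow> nat \<Rightarrow>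
    (nat set set \<times> nat set set \<times> nat set) set" where
  "Uset n E W w l = {(E1, E2, L). E1 \<subseteq> E \<and> card E1 = l div 2 \<and> E2 \<subseteq> E \<and> card E2 = l div 2 \<and>
      E1 \<inter> E2 = {} \<and> wt W (E1 \<union> E2) = w \<and> L \<subseteq> {1..n} \<and> card L = n - l}"

definition Aset :: "nat \<Rightarrow> nat set set \<Rightarrow> (nat set \<Rightarrow> nat) \<Rightarrow> nat \<Rightarrow> nat \<Rightarrow> nat \<Rightarrow>
    (nat set set \<times> nat set set \<times> nat set) set" where
  "Aset n E W w l i =
    (if i \<le> n then {(E1, E2, L) \<in> Uset n E W w l. i \<in> verts E1 \<union> L}
     else {(E1, E2, L) \<in> Uset n E W w l. i - n \<in> verts E2 \<union> L})"

end

theory Submission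
  imports Defs
begin

text \<open>A triple \<open>(E\<^sub>1, E\<^sub>2, L)\<close> lies in every \<open>A\<^sub>i\<close> exactly when both \<open>V(E\<^sub>1) \<union> L\<close> and
  \<open>V(E\<^sub>2) \<union> L\<close> cover \<open>[n]\<close>. As \<open>|L| = n - \<ell>\<close> and \<open>|V(E\<^sub>j)| \<le> 2|E\<^sub>j| = \<ell>\<close>, such a cover is
  tight: the edges of \<open>E\<^sub>j\<close> are pairwise disjoint and \<open>V(E\<^sub>j)\<close> is the complement of \<open>L\<close>.
  So the intersection consists of the triples \<open>(M\<^sub>1, M\<^sub>2, [n] - V(M\<^sub>1))\<close> with \<open>(M\<^sub>1, M\<^sub>2)\<close>
  in \<open>\<M>\<^sub>w\<^sub>,\<^sub>\<ell>\<close>, and forgetting \<open>L\<close> is a bijection.\<close>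

lemma card_Union_eq_sum_card_imp_pairwise_disjnt:
  assumes "finite C" "\<And>A. A \<in> C \<Longrightarrow> finite A" "card (\<Union>C) = sum card C"
  shows "pairwise disjnt C"
proof (rule ccontr)
  assume "\<not> pairwise disjnt C"
  then obtain A B where AB: "A \<in> C" "B \<in> C" "A \<noteq> B" "A \<inter> B \<noteq> {}"
    by (auto simp: pairwise_def disjnt_def)
  have finAB: "finite A" "finite B" using AB assms(2) by auto
  have "\<Union>C = (A \<union> B) \<union> \<Union>(C - {A, B})" using AB(1,2) by blast
  then have "card (\<Union>C) \<le> card (A \<union> B) + card (\<Union>(C - {A, B}))"
    by (metis card_Un_le)
  also have "\<dots> < card A + card B + card (\<Union>(C - {A, B}))"
    using card_Un_Int[OF finAB] AB(4) finAB by (simp add: card_gt_0_iff)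
  also have "\<dots> \<le> card A + card B + sum card (C - {A, B})"
    using card_Union_le_sum_card by simp
  also have "\<dots> = sum card C"
  proof -
    have "sum card (C - {A}) = card B + sum card (C - {A} - {B})"
      using AB assms(1) by (intro sum.remove) auto
    moreover have "C - {A} - {B} = C - {A, B}" by blast
    ultimately show ?thesis using sum.remove[OF assms(1) AB(1), of card] by simp
  qed
  finally show False using assms(3) by simp
qed

lemma matching_iff_pairwise_disjnt: "matching E M \<longleftrightarrow> M \<subseteq> E \<and> pairwise disjnt M"
  unfolding matching_def pairwise_def disjnt_def by blast

lemma card_verts_pairwise_disjnt:
  assumes "pairwise disjnt M" "\<forall>e\<in>M. card e = 2"
  shows "card (verts M) = 2 * card M"
proof -
  have "card (verts M) = sum card M"
    unfolding verts_def using assms by (intro card_Union_disjoint) (auto intro: card_ge_0_finite)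
  then show ?thesis using assms(2) by simp
qed

lemma tight_edge_cover:
  fixes F :: "nat set set"
  assumes "finite V" "verts F \<subseteq> V" "L \<subseteq> V" "\<forall>e\<in>F. card e = 2"
    and "2 * card F + card L \<le> card V" "V \<subseteq> verts F \<union> L"
  shows "pairwise disjnt F \<and> verts F = V - L"
proof -
  have finVF: "finite (verts F)" and finL: "finite L"
    using finite_subset[OF assms(2,1)] finite_subset[OF assms(3,1)] .
  then have finF: "finite F" and fin_edges: "\<And>e. e \<in> F \<Longrightarrow> finite e"
    unfolding verts_def by (auto intro: finite_UnionD finite_subset[OF Union_upper])
  have "card V \<le> card (verts F \<union> L)" using finVF finL assms(6) by (intro card_mono) auto
  moreover have "card (verts F \<union> L) \<le> card (verts F) + card L" by (rule card_Un_le)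
  moreover have "card (verts F) \<le> sum card F" unfolding verts_def by (rule card_Union_le_sum_card)
  moreover have "sum card F = 2 * card F" using assms(4) by simp
  ultimately have "card (verts F) = sum card F" "card (verts F \<union> L) = card (verts F) + card L"
    using assms(5) by linarith+
  then have "pairwise disjnt F" "verts F \<inter> L = {}"
    using card_Union_eq_sum_card_imp_pairwise_disjnt[OF finF fin_edges] card_Un_Int[OF finVF finL]
      finVF unfolding verts_def by auto
  then show ?thesis using assms(2,6) by blast
qed

lemma Uset_Inter_Aset_eq:
  "Uset n E W w l \<inter> (\<Inter>i\<in>{1..2*n}. Aset n E W w l i) =
    {(E1, E2, L) \<in> Uset n E W w l. {1..n} \<subseteq> verts E1 \<union> L \<and> {1..n} \<subseteq> verts E2 \<union> L}"
proof (intro equalityI subsetI)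
  fix x assume x: "x \<in> Uset n E W w l \<inter> (\<Inter>i\<in>{1..2*n}. Aset n E W w l i)"
  obtain E1 E2 L where x_eq: "x = (E1, E2, L)" by (cases x)
  have "i \<in> verts E1 \<union> L \<and> i \<in> verts E2 \<union> L" if "i \<in> {1..n}" for i
  proof -
    have "x \<in> Aset n E W w l i" "x \<in> Aset n E W w l (i + n)" using x that by auto
    then show ?thesis using that unfolding Aset_def x_eq by auto
  qed
  then show "x \<in> {(E1, E2, L) \<in> Uset n E W w l. {1..n} \<subseteq> verts E1 \<union> L \<and> {1..n} \<subseteq> verts E2 \<union> L}"
    using x unfolding x_eq by blast
next
  fix x assume x: "x \<in> {(E1, E2, L) \<in> Uset n E W w l. {1..n} \<subseteq> verts E1 \<union> L \<and> {1..n} \<subseteq> verts E2 \<union> L}"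
  have "x \<in> Aset n E W w l i" if "i \<in> {1..2*n}" for i
  proof (cases "i \<le> n")
    case True
    then show ?thesis using x that unfolding Aset_def by auto
  next
    case False
    then have "i - n \<in> {1..n}" using that by auto
    then show ?thesis using x False unfolding Aset_def by auto
  qed
  then show "x \<in> Uset n E W w l \<inter> (\<Inter>i\<in>{1..2*n}. Aset n E W w l i)" using x by auto
qed

lemma covering_triples_eq_image_Mset:
  assumes "simple_graph n E" "even l" "l \<le> n"
  shows "{(E1, E2, L) \<in> Uset n E W w l. {1..n} \<subseteq> verts E1 \<union> L \<and> {1..n} \<subseteq> verts E2 \<union> L} =
    (\<lambda>(M1, M2). (M1, M2, {1..n} - verts M1)) ` Mset E W w l"
    (is "?covering = ?image")
proof -
  have finE: "finite E" and edges: "\<forall>e\<in>E. e \<subseteq> {1..n} \<and> card e = 2"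
    using assms(1) unfolding simple_graph_def by auto
  have l_eq: "2 * (l div 2) = l" using assms(2) by simp
  have verts_sub: "verts F \<subseteq> {1..n}" if "F \<subseteq> E" for F
    using that edges unfolding verts_def by blast
  have tight: "matching E F \<and> verts F = {1..n} - L"
    if "F \<subseteq> E" "card F = l div 2" "L \<subseteq> {1..n}" "card L = n - l" "{1..n} \<subseteq> verts F \<union> L"
    for F L
  proof -
    have "2 * card F + card L \<le> card {1..n}" using that(2,4) l_eq assms(3) by simp
    then show ?thesis
      using tight_edge_cover[of "{1..n}" F L] that(1,3,5) verts_sub[OF that(1)] edges
      unfolding matching_iff_pairwise_disjnt by blast
  qed
  have card_complement: "card ({1..n} - verts M) = n - l"
    if "matching E M" "card M = l div 2" for M
  proof -
    have M: "M \<subseteq> E" "pairwise disjnt M" using that(1) unfolding matching_iff_pairwise_disjnt by auto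
    then have "card (verts M) = l" using card_verts_pairwise_disjnt[of M] edges that(2) l_eq by auto
    then show ?thesis using verts_sub[OF M(1)] by (simp add: card_Diff_subset finite_subset)
  qed
  show ?thesis
  proof (intro equalityI subsetI)
    fix x assume "x \<in> ?covering"
    then obtain E1 E2 L where x: "x = (E1, E2, L)" "(E1, E2, L) \<in> Uset n E W w l"
      "{1..n} \<subseteq> verts E1 \<union> L" "{1..n} \<subseteq> verts E2 \<union> L"
      by auto
    then have "matching E E1 \<and> verts E1 = {1..n} - L" "matching E E2 \<and> verts E2 = {1..n} - L"
      using tight unfolding Uset_def by auto
    moreover have "L = {1..n} - verts E1" using x(2) calculation(1) unfolding Uset_def by auto
    ultimately show "x \<in> ?image"
      using x(1,2) unfolding Uset_def Mset_def consistent_def by (auto simp: image_iff)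
  next
    fix x assume "x \<in> ?image"
    then obtain M1 M2 where x: "x = (M1, M2, {1..n} - verts M1)" "(M1, M2) \<in> Mset E W w l"
      by auto
    then show "x \<in> ?covering"
      using card_complement[of M1] unfolding Mset_def Uset_def consistent_def matching_def
      by auto
  qed
qed

theorem lemma4:
  fixes n N w l :: nat and E :: "nat set set" and W :: "nat set \<Rightarrow> nat"
  assumes "simple_graph n E"
    and "\<forall>e\<in>E. W e \<in> {1..N}"
    and "even l" and "l \<le> n"
  shows "card (Uset n E W w l \<inter> (\<Inter>i\<in>{1..2*n}. Aset n E W w l i)) = card (Mset E W w l)"
proof -
  have "inj_on (\<lambda>(M1, M2). (M1, M2, {1..n} - verts M1)) (Mset E W w l)"
    by (auto simp: inj_on_def)
  then show ?thesis
    unfolding Uset_Inter_Aset_eq covering_triples_eq_image_Mset[OF assms(1,3,4)]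
    by (rule card_image)
qed

end
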